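(* Let $P(x)=\sum_{i=0}^n p_i x^i\in\mathbb{R}[x]$ be a polynomial of degree $n\ge 2$ that is not identically zero. For a point $m\in\mathbb{R}$, a real $\epsilon>0$ and a positive integer $N$, write $m[\epsilon;N]:=\{m+i\epsilon : i=-\lceil N/2\rceil,\dots,\lceil N/2\rceil\}$. Let $\mathbf{m}:=m[\epsilon;n]$ and $\mathbf{M}:=m[\epsilon/2^{\lambda};2^{\lambda}n]$, where $\lambda\ge 2$ is an integer with $\lambda=O(\log n)$. Consider the following randomized procedure: for $\rho=63,127,255,\dots$ (i.e. $\rho_{j+1}=2\rho_j+1$), pick a point $m_j\in\mathbf{M}$ uniformly at random (independently in each iteration), compute (by interval arithmetic) an approximation $\tilde v_j$ of $v_j=P(m_j)$ with $|\tilde v_j-v_j|<2^{-\rho}$, and if $|\tilde v_j|>2^{-\rho+2}$, return $m':=m_j$ (otherwise continue with the next $\rho$). Then, for every integer $k\ge 1$, with probability at least $1-2^{-k(\lambda-1)}$ the procedure returns a point $m'\in\mathbf{M}$ with $P(m')\neq 0$ and $$\log\max\bigl(1,|P(m')|^{-1}\bigr)=2^k\cdot O\Bigl(n\log n+\log\max\bigl(1,(\max_{m_i\in\mathbf{m}}|P(m_i)|)^{-1}\bigr)\Bigr),$$ where the implied constant depends only on the implied constant in $\lambda=O(\log n)$ (logarithms are to base 2).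
   Context: The returned point is called a pseudo-admissible point. The point of the statement is a bound on $-\log|P(m')|$ (equivalently on the working precision $\rho$ at termination) that holds with high probability over the random choices of the procedure. *)

theory Defs
  imports "HOL-Probability.Probability" "HOL-Computational_Algebra.Polynomial"
begin

definition grid :: "real \<Rightarrow> real \<Rightarrow> nat \<Rightarrow> real set" where
  "grid m eps N = {m + of_int i * eps | i::int.
      - \<lceil>real N / 2\<rceil> \<le> i \<and> i \<le> \<lceil>real N / 2\<rceil>}"

text \<open>Working precision in iteration j (j = 0,1,2,...): 63, 127, 255, ...,
  i.e. rho 0 = 63 and rho (j+1) = 2 * rho j + 1.\<close>
definition rho :: "nat \<Rightarrow> nat" where
  "rho j = 2 ^ (j + 6) - 1"

text \<open>Acceptance test of iteration j at sampled point x, using the approximation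
  oracle approx (approx r x approximates P(x) to absolute error < 2^-r).\<close>
definition accept :: "(nat \<Rightarrow> real \<Rightarrow> real) \<Rightarrow> nat \<Rightarrow> real \<Rightarrow> bool" where
  "accept approx j x \<longleftrightarrow> \<bar>approx (rho j) x\<bar> > 2 powr (- real (rho j) + 2)"

text \<open>Given the sequence of random samples omega (omega !! j is the point picked in
  iteration j), the procedure returns in iteration j (and hence returns omega !! j).\<close>
definition returns_at :: "(nat \<Rightarrow> real \<Rightarrow> real) \<Rightarrow> real stream \<Rightarrow> nat \<Rightarrow> bool" where
  "returns_at approx \<omega> j \<longleftrightarrow>
     (\<forall>i<j. \<not> accept approx i (\<omega> !! i)) \<and> accept approx j (\<omega> !! j)"

end

theory Submission
  imports Defs
begin

text \<open>Call a point x of the fine grid M small if \<bar>P(x)\<bar> \<le> T, where T is the maximum of \<bar>P\<bar> on the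
  coarse grid m divided by 2(n+1)((n+1)2^\<lambda>)^n. There are at most n small points: Lagrange
  interpolation through n+1 of them expresses P at a point of m with weights bounded by
  ((n+1)2^\<lambda>)^n, which would bound the maximum of \<bar>P\<bar> on m by half of itself. Since M has more
  than 2^\<lambda>n points, a uniform sample is small with probability below 2^-\<lambda>.

  As the values are known to precision 2^-\<rho>, an accepted sample satisfies \<bar>P\<bar> > 2^-\<rho>, and once
  5 \<cdot> 2^-\<rho> \<le> T every sample that is not small is accepted. Since \<rho>(j) \<ge> 2^j, this is the case
  from an iteration j0 with 2^j0 \<le> 2 max(1, log(5/T)) on, and log(5/T) = O(n log n + log max(1,
  1/max \<bar>P\<bar>)). Unless the samples of the k iterations j0, ..., j0+k-1 are all small, the
  procedure returns in one of them, with \<rho> \<le> 2^(j0+k+5).\<close>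

section \<open>Grids\<close>

lemma grid_eq_image: "grid m d N = (\<lambda>i. m + of_int i * d) ` {-\<lceil>real N / 2\<rceil>..\<lceil>real N / 2\<rceil>}"
  unfolding grid_def by auto

lemma finite_grid [simp]: "finite (grid m d N)"
  unfolding grid_eq_image by simp

lemma center_in_grid: "m \<in> grid m d N"
  unfolding grid_def by (rule CollectI, rule exI[of _ 0]) auto

lemma grid_nonempty [simp]: "grid m d N \<noteq> {}"
  using center_in_grid by blast

lemma card_grid_ge:
  assumes "d > 0"
  shows "N + 1 \<le> card (grid m d N)"
proof -
  have "inj_on (\<lambda>i. m + of_int i * d) {-\<lceil>real N / 2\<rceil>..\<lceil>real N / 2\<rceil>}"
    using assms by (auto simp: inj_on_def)
  then have "card (grid m d N) = nat (2 * \<lceil>real N / 2\<rceil> + 1)"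
    unfolding grid_eq_image by (simp add: card_image)
  moreover have "real N / 2 \<le> of_int \<lceil>real N / 2\<rceil>" by (rule le_of_int_ceiling)
  ultimately show ?thesis by linarith
qed

lemma grid_abs_diff_center_le:
  assumes "d > 0" and "x \<in> grid m d N"
  shows "\<bar>x - m\<bar> \<le> (real N + 1) / 2 * d"
proof -
  obtain i :: int where i: "x = m + of_int i * d" "- \<lceil>real N / 2\<rceil> \<le> i" "i \<le> \<lceil>real N / 2\<rceil>"
    using assms(2) unfolding grid_def by auto
  have "of_int \<lceil>real N / 2\<rceil> - 1 < real N / 2" using ceiling_correct[of "real N / 2"] by linarith
  then have "2 * \<lceil>real N / 2\<rceil> \<le> int N + 1" by linarith
  then have "2 * \<bar>i\<bar> \<le> int N + 1" using i(2,3) by linarith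
  then have "real_of_int (2 * \<bar>i\<bar>) \<le> real_of_int (int N + 1)" by (rule of_int_le_iff[THEN iffD2])
  then have "\<bar>of_int i\<bar> \<le> (real N + 1) / 2" by simp
  then show ?thesis
    using i(1) assms(1) by (simp add: abs_mult mult_right_mono)
qed

lemma grid_abs_diff_ge:
  assumes "d > 0" and "x \<in> grid m d N" "z \<in> grid m d N" "x \<noteq> z"
  shows "d \<le> \<bar>x - z\<bar>"
proof -
  obtain i j :: int where ij: "x = m + of_int i * d" "z = m + of_int j * d"
    using assms(2,3) unfolding grid_def by auto
  then have "i \<noteq> j" using assms(4) by auto
  then have "1 \<le> \<bar>real_of_int (i - j)\<bar>" by linarith
  moreover have "x - z = real_of_int (i - j) * d" using ij by (simp add: algebra_simps)
  ultimately show ?thesis using assms(1) by (simp add: abs_mult mult_le_cancel_right1)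
qed

section \<open>Lagrange interpolation\<close>

definition lagrange_interpolant :: "'a::field set \<Rightarrow> ('a \<Rightarrow> 'a) \<Rightarrow> 'a poly" where
  "lagrange_interpolant B f =
     (\<Sum>x\<in>B. smult (f x / (\<Prod>z\<in>B - {x}. x - z)) (\<Prod>z\<in>B - {x}. [:- z, 1:]))"

lemma poly_lagrange_interpolant:
  "poly (lagrange_interpolant B f) y = (\<Sum>x\<in>B. f x * (\<Prod>z\<in>B - {x}. (y - z) / (x - z)))"
  by (simp add: lagrange_interpolant_def poly_sum poly_prod prod_dividef)

lemma poly_lagrange_interpolant_node:
  assumes "finite B" and "x \<in> B"
  shows "poly (lagrange_interpolant B f) x = f x"
proof -
  have "(\<Sum>x'\<in>B - {x}. f x' * (\<Prod>z\<in>B - {x'}. (x - z) / (x' - z))) = 0"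
    using assms by (intro sum.neutral ballI) (auto intro!: prod_zero)
  moreover have "(\<Prod>z\<in>B - {x}. (x - z) / (x - z)) = 1" by (intro prod.neutral) auto
  ultimately show ?thesis
    unfolding poly_lagrange_interpolant sum.remove[OF assms] by simp
qed

lemma degree_lagrange_interpolant:
  assumes "finite B"
  shows "degree (lagrange_interpolant B f) \<le> card B - 1"
  unfolding lagrange_interpolant_def
proof (rule degree_sum_le)
  fix x assume "x \<in> B"
  have "degree (\<Prod>z\<in>B - {x}. [:- z, 1:]) \<le> (\<Sum>z\<in>B - {x}. degree [:- z, 1:])"
    using degree_prod_sum_le[of "B - {x}" "\<lambda>z. [:- z, 1:]"] assms by (simp add: o_def)
  also have "\<dots> = card B - 1" using assms \<open>x \<in> B\<close> by simp
  finally show "degree (smult (f x / (\<Prod>z\<in>B - {x}. x - z)) (\<Prod>z\<in>B - {x}. [:- z, 1:])) \<le> card B - 1"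
    by (rule order.trans[OF degree_smult_le])
qed (fact assms)

lemma lagrange_interpolation:
  fixes P :: "'a::field poly"
  assumes "finite B" and "degree P < card B"
  shows "poly P y = (\<Sum>x\<in>B. poly P x * (\<Prod>z\<in>B - {x}. (y - z) / (x - z)))"
proof -
  have "P = lagrange_interpolant B (poly P)"
  proof (rule poly_eqI_degree)
    show "poly P x = poly (lagrange_interpolant B (poly P)) x" if "x \<in> B" for x
      using assms(1) that by (simp add: poly_lagrange_interpolant_node)
    show "degree (lagrange_interpolant B (poly P)) < card B"
      using degree_lagrange_interpolant[OF assms(1), of "poly P"] assms(2) by linarith
  qed (fact assms(2))
  then show ?thesis by (metis poly_lagrange_interpolant)
qed

lemma abs_poly_le_interpolation_bound:
  fixes P :: "real poly" and T R y :: real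
  assumes B: "finite B" "degree P < card B"
    and small: "\<And>x. x \<in> B \<Longrightarrow> \<bar>poly P x\<bar> \<le> T"
    and ratio: "\<And>x z. x \<in> B \<Longrightarrow> z \<in> B - {x} \<Longrightarrow> \<bar>(y - z) / (x - z)\<bar> \<le> R"
  shows "\<bar>poly P y\<bar> \<le> card B * T * R ^ (card B - 1)"
proof -
  have "poly P y = (\<Sum>x\<in>B. poly P x * (\<Prod>z\<in>B - {x}. (y - z) / (x - z)))"
    by (rule lagrange_interpolation[OF B])
  then have "\<bar>poly P y\<bar> \<le> (\<Sum>x\<in>B. \<bar>poly P x * (\<Prod>z\<in>B - {x}. (y - z) / (x - z))\<bar>)"
    by (simp only: sum_abs)
  also have "\<dots> = (\<Sum>x\<in>B. \<bar>poly P x\<bar> * (\<Prod>z\<in>B - {x}. \<bar>(y - z) / (x - z)\<bar>))"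
    by (simp only: abs_mult abs_prod)
  also have "\<dots> \<le> (\<Sum>x\<in>B. T * R ^ (card B - 1))"
  proof (rule sum_mono)
    fix x assume x: "x \<in> B"
    have "(\<Prod>z\<in>B - {x}. \<bar>(y - z) / (x - z)\<bar>) \<le> (\<Prod>z\<in>B - {x}. R)"
      using ratio x by (intro prod_mono) auto
    also have "\<dots> = R ^ (card B - 1)" using B(1) x by simp
    finally show "\<bar>poly P x\<bar> * (\<Prod>z\<in>B - {x}. \<bar>(y - z) / (x - z)\<bar>) \<le> T * R ^ (card B - 1)"
      using small[OF x] abs_ge_zero[of "poly P x"] by (intro mult_mono) (auto intro: prod_nonneg)
  qed
  also have "\<dots> = card B * T * R ^ (card B - 1)" by simp
  finally show ?thesis .
qed

section \<open>Few small values on the fine grid\<close>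

lemma Max_abs_poly_grid_pos:
  fixes P :: "real poly"
  assumes "P \<noteq> 0" and "degree P \<le> N" and "d > 0"
  shows "0 < Max ((\<lambda>y. \<bar>poly P y\<bar>) ` grid m d N)"
proof -
  have "\<not> grid m d N \<subseteq> {x. poly P x = 0}"
  proof
    assume "grid m d N \<subseteq> {x. poly P x = 0}"
    then have "card (grid m d N) \<le> card {x. poly P x = 0}"
      by (intro card_mono poly_roots_finite assms(1))
    also have "\<dots> \<le> N" using card_poly_roots_bound[OF assms(1)] assms(2) by simp
    finally show False using card_grid_ge[OF assms(3), of N m] by simp
  qed
  then obtain y where "y \<in> grid m d N" "poly P y \<noteq> 0" by auto
  then show ?thesis by (subst Max_gr_iff) (auto simp: finite_grid)
qed

lemma grid_refinement_ratio_le: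
  assumes eps: "eps > 0" and y: "y \<in> grid m eps n"
    and xz: "x \<in> grid m (eps / 2 ^ lam) (2 ^ lam * n)" "z \<in> grid m (eps / 2 ^ lam) (2 ^ lam * n)"
      "x \<noteq> z"
  shows "\<bar>(y - z) / (x - z)\<bar> \<le> real (n + 1) * 2 ^ lam"
proof -
  let ?d = "eps / 2 ^ lam"
  have d: "?d > 0" using eps by simp
  have "(real (2 ^ lam * n) + 1) / 2 * ?d = (real n + 1 / 2 ^ lam) / 2 * eps"
    by (simp add: field_simps)
  also have "\<dots> \<le> (real n + 1) / 2 * eps"
    using eps by (intro mult_right_mono divide_right_mono) (auto simp: field_simps)
  finally have "\<bar>z - m\<bar> \<le> (real n + 1) / 2 * eps"
    using grid_abs_diff_center_le[OF d xz(2)] by linarith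
  moreover have "\<bar>y - m\<bar> \<le> (real n + 1) / 2 * eps" by (rule grid_abs_diff_center_le[OF eps y])
  ultimately have "\<bar>y - z\<bar> \<le> (real n + 1) * eps" by linarith
  moreover have "?d \<le> \<bar>x - z\<bar>" by (rule grid_abs_diff_ge[OF d xz])
  ultimately have "\<bar>y - z\<bar> / \<bar>x - z\<bar> \<le> (real n + 1) * eps / ?d"
    using d by (intro frac_le) auto
  also have "\<dots> = real (n + 1) * 2 ^ lam" using eps by (simp add: field_simps)
  finally show ?thesis by (simp add: abs_divide)
qed

definition small_value_threshold :: "real \<Rightarrow> nat \<Rightarrow> nat \<Rightarrow> real" where
  "small_value_threshold M n lam = M / (2 * (real (n + 1) * (real (n + 1) * 2 ^ lam) ^ n))"

lemma card_small_values_le: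
  fixes P :: "real poly" and m eps :: real
  assumes P: "P \<noteq> 0" "degree P \<le> n" and eps: "eps > 0"
  defines "Mx \<equiv> Max ((\<lambda>y. \<bar>poly P y\<bar>) ` grid m eps n)"
  shows "card {x \<in> grid m (eps / 2 ^ lam) (2 ^ lam * n).
            \<bar>poly P x\<bar> \<le> small_value_threshold Mx n lam} \<le> n"
proof (rule ccontr)
  let ?T = "small_value_threshold Mx n lam"
  assume "\<not> ?thesis"
  then have "Suc n \<le> card {x \<in> grid m (eps / 2 ^ lam) (2 ^ lam * n). \<bar>poly P x\<bar> \<le> ?T}"
    by simp
  then obtain B where B: "B \<subseteq> {x \<in> grid m (eps / 2 ^ lam) (2 ^ lam * n). \<bar>poly P x\<bar> \<le> ?T}"
    "card B = Suc n" "finite B"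
    by (rule obtain_subset_with_card_n)
  have "\<bar>poly P y\<bar> \<le> Mx / 2" if y: "y \<in> grid m eps n" for y
  proof -
    have "\<bar>poly P y\<bar> \<le> card B * ?T * (real (n + 1) * 2 ^ lam) ^ (card B - 1)"
    proof (rule abs_poly_le_interpolation_bound)
      show "\<bar>(y - z) / (x - z)\<bar> \<le> real (n + 1) * 2 ^ lam" if "x \<in> B" "z \<in> B - {x}" for x z
        using that B(1) by (intro grid_refinement_ratio_le[OF eps y]) auto
    next
      show "finite B" by (fact B(3))
      show "degree P < card B" using B(2) P(2) by simp
      show "\<bar>poly P x\<bar> \<le> ?T" if "x \<in> B" for x using that B(1) by blast
    qed
    also have "\<dots> = Mx / 2" using B(2) by (simp add: small_value_threshold_def)
    finally show ?thesis .
  qed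
  moreover have "Mx \<in> (\<lambda>y. \<bar>poly P y\<bar>) ` grid m eps n"
    unfolding Mx_def using center_in_grid by (intro Max_in finite_imageI finite_grid) blast
  moreover have "0 < Mx" unfolding Mx_def using Max_abs_poly_grid_pos[OF P eps] .
  ultimately show False by fastforce
qed

lemma log_inverse_small_value_threshold_le:
  fixes c Mx :: real
  assumes n: "n \<ge> 2" and lam: "real lam \<le> c * log 2 (real n)" and Mx: "Mx > 0"
  shows "log 2 (5 / small_value_threshold Mx n lam)
    \<le> (6 + \<bar>c\<bar>) * (real n * log 2 (real n) + log 2 (max 1 (1 / Mx)))"
proof -
  define l where "l = log 2 (real n)"
  define L where "L = log 2 (max 1 (1 / Mx))"
  have l: "1 \<le> l" unfolding l_def using n by simp
  have "- log 2 Mx = log 2 (1 / Mx)" using Mx by (simp add: log_divide)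
  also have "\<dots> \<le> L" unfolding L_def using Mx by simp
  finally have log_Mx: "- log 2 Mx \<le> L" .
  have "log 2 (real n + 1) \<le> log 2 (2 * real n)" using n by simp
  also have "\<dots> = 1 + l" unfolding l_def using n by (simp add: log_mult)
  finally have log_n1: "log 2 (real n + 1) \<le> 2 * l" using l by linarith
  have "log 2 10 \<le> log 2 (2 ^ 4 :: real)" by simp
  then have log_10: "log 2 10 \<le> (4::real)" by (simp only: log_nat_power) simp
  have lam_le: "real lam \<le> \<bar>c\<bar> * l"
    using lam l unfolding l_def by (smt (verit) mult_right_mono)
  have threshold: "5 / small_value_threshold Mx n lam = 10 * (real n + 1) * ((real n + 1) * 2 ^ lam) ^ n / Mx"
    using Mx by (simp add: small_value_threshold_def field_simps)
  have log_10n: "log 2 (10 * real n + 10) = log 2 10 + log 2 (real n + 1)"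
    using log_mult[of 2 10 "real n + 1"] by (simp add: algebra_simps)
  have "log 2 (5 / small_value_threshold Mx n lam)
      = log 2 10 + log 2 (real n + 1) + real n * (log 2 (real n + 1) + real lam) - log 2 Mx"
    unfolding threshold using Mx by (simp add: log_divide log_mult log_nat_power log_10n)
  also have "\<dots> \<le> 4 + 2 * l + real n * (2 * l + \<bar>c\<bar> * l) + L"
  proof -
    have "real n * (log 2 (real n + 1) + real lam) \<le> real n * (2 * l + \<bar>c\<bar> * l)"
      using log_n1 lam_le by (intro mult_left_mono) auto
    then show ?thesis using log_10 log_n1 log_Mx by linarith
  qed
  also have "\<dots> \<le> (6 + \<bar>c\<bar>) * (real n * l + L)"
  proof -
    have "2 * 1 \<le> real n * l" using n l by (intro mult_mono) auto
    moreover have "2 * l \<le> real n * l" using n l by (intro mult_right_mono) auto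
    moreover have "0 \<le> L" "0 \<le> \<bar>c\<bar> * L" unfolding L_def by simp_all
    moreover have "4 + 2 * l + real n * (2 * l + \<bar>c\<bar> * l) + L
        = 4 + 2 * l + 2 * (real n * l) + \<bar>c\<bar> * (real n * l) + L"
      "(6 + \<bar>c\<bar>) * (real n * l + L)
        = 6 * (real n * l) + \<bar>c\<bar> * (real n * l) + 6 * L + \<bar>c\<bar> * L"
      by (simp_all add: algebra_simps)
    ultimately show ?thesis by linarith
  qed
  finally show ?thesis unfolding l_def L_def .
qed

lemma one_le_log_complexity:
  fixes c Mx :: real
  assumes "n \<ge> 2"
  shows "1 \<le> (6 + \<bar>c\<bar>) * (real n * log 2 (real n) + log 2 (max 1 (1 / Mx)))"
proof -
  have "2 * 1 \<le> real n * log 2 (real n)" using assms by (intro mult_mono) auto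
  then have "1 \<le> real n * log 2 (real n) + log 2 (max 1 (1 / Mx))" by (simp add: add_increasing2)
  then show ?thesis using mult_mono[of 1 "6 + \<bar>c\<bar>" 1] by simp
qed

section \<open>Precision schedule and acceptance test\<close>

lemma two_power_le_rho: "(2::real) ^ j \<le> real (rho j)"
proof -
  have "(2::nat) ^ j \<le> 2 ^ (j + 6) - 1"
    using one_le_power[of "2::nat" j] by (simp add: power_add)
  then show ?thesis unfolding rho_def by (metis of_nat_le_iff of_nat_numeral of_nat_power)
qed

lemma rho_le_two_power: "real (rho j) \<le> 2 ^ (j + 6)"
  unfolding rho_def by (simp add: of_nat_diff)

lemma rho_mono: "i \<le> j \<Longrightarrow> rho i \<le> rho j"
  unfolding rho_def by (intro diff_le_mono power_increasing) auto

lemma power_of_two_between: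
  fixes x :: real
  assumes "1 \<le> x"
  obtains j :: nat where "x \<le> 2 ^ j" and "2 ^ j \<le> 2 * x"
proof -
  obtain j' :: nat where "x < 2 ^ j'" using real_arch_pow[of 2 x] by auto
  then have ex: "\<exists>j::nat. x \<le> 2 ^ j" by (auto intro: less_imp_le)
  define j where "j = (LEAST j::nat. x \<le> 2 ^ j)"
  have j: "x \<le> 2 ^ j" unfolding j_def by (rule LeastI_ex[OF ex])
  show ?thesis
  proof (cases j)
    case 0
    then show ?thesis using that[of j] j assms by auto
  next
    case (Suc i)
    then have "\<not> x \<le> 2 ^ i" unfolding j_def by (metis lessI not_less_Least)
    then show ?thesis using that[of j] j Suc by auto
  qed
qed

lemma exists_start_iteration:
  fixes T Q :: real
  assumes T: "0 < T" and Q: "log 2 (5 / T) \<le> Q" "1 \<le> Q"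
  obtains j0 where "5 * 2 powr - real (rho j0) \<le> T"
    and "\<And>j. j < j0 + k \<Longrightarrow> real (rho j) \<le> 2 ^ k * (64 * Q)"
proof -
  obtain j0 :: nat where j0: "Q \<le> 2 ^ j0" "2 ^ j0 \<le> 2 * Q"
    using power_of_two_between[OF Q(2)] .
  have "log 2 (5 / T) \<le> real (rho j0)" using Q(1) j0(1) two_power_le_rho[of j0] by linarith
  then have "5 / T \<le> 2 powr real (rho j0)" using T by (simp add: log_le_iff)
  then have start: "5 * 2 powr - real (rho j0) \<le> T"
    using T by (simp add: powr_minus_divide field_simps)
  have "real (rho j) \<le> 2 ^ k * (64 * Q)" if "j < j0 + k" for j
  proof -
    have "real (rho j) \<le> 2 ^ (j + 6)" by (rule rho_le_two_power)
    also have "\<dots> \<le> 2 ^ (j0 + k + 5)" using that by (intro power_increasing) auto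
    also have "\<dots> = 2 ^ k * (32 * 2 ^ j0)" by (simp add: power_add)
    also have "\<dots> \<le> 2 ^ k * (64 * Q)" using j0(2) by simp
    finally show ?thesis .
  qed
  with start show ?thesis by (rule that)
qed

lemma powr_two_add_two: "2 powr (- real r + 2) = 4 * 2 powr (- real r)"
proof -
  have "2 powr (- real r + 2) = 2 powr (- real r) * 2 powr 2" by (rule powr_add)
  then show ?thesis by simp
qed

lemma abs_gt_if_accept:
  assumes "\<bar>approx (rho j) x - v\<bar> < 2 powr - real (rho j)" and "accept approx j x"
  shows "2 powr - real (rho j) < \<bar>v\<bar>"
  using assms unfolding accept_def powr_two_add_two by linarith

lemma accept_if_abs_ge:
  assumes "\<bar>approx (rho j) x - v\<bar> < 2 powr - real (rho j)" and "5 * 2 powr - real (rho j) \<le> \<bar>v\<bar>"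
  shows "accept approx j x"
  using assms unfolding accept_def powr_two_add_two by linarith

lemma log_max_inverse_le:
  fixes r v :: real
  assumes "0 \<le> r" and "2 powr - r < \<bar>v\<bar>"
  shows "log 2 (max 1 (1 / \<bar>v\<bar>)) \<le> r"
proof -
  have "0 < 2 powr - r" by simp
  then have "1 / \<bar>v\<bar> < 1 / 2 powr - r"
    using assms by (intro divide_strict_left_mono mult_pos_pos) auto
  then have "max 1 (1 / \<bar>v\<bar>) \<le> 2 powr r"
    using ge_one_powr_ge_zero[OF _ assms(1), of 2] by (simp add: powr_minus_divide)
  then show ?thesis by (subst log_le_iff) auto
qed

lemma exists_returns_at_le:
  assumes "accept approx i (\<omega> !! i)"
  shows "\<exists>j\<le>i. returns_at approx \<omega> j"
proof -
  define j where "j = (LEAST j. accept approx j (\<omega> !! j))"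
  have "accept approx j (\<omega> !! j)"
    unfolding j_def by (rule LeastI[of "\<lambda>j. accept approx j (\<omega> !! j)", OF assms])
  moreover have "\<not> accept approx i' (\<omega> !! i')" if "i' < j" for i'
    using that unfolding j_def by (rule not_less_Least)
  moreover have "j \<le> i"
    unfolding j_def by (rule Least_le[of "\<lambda>j. accept approx j (\<omega> !! j)", OF assms])
  ultimately show ?thesis unfolding returns_at_def by blast
qed

lemma returns_pseudo_admissible:
  fixes f :: "real \<Rightarrow> real"
  assumes approx: "\<And>r x. x \<in> G \<Longrightarrow> \<bar>approx r x - f x\<bar> < 2 powr - real r"
    and samples: "\<And>i. \<omega> !! i \<in> G"
    and start: "5 * 2 powr - real (rho j0) \<le> T"
    and good: "T < \<bar>f (\<omega> !! (j0 + i))\<bar>"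
  shows "\<exists>j\<le>j0 + i. returns_at approx \<omega> j \<and> f (\<omega> !! j) \<noteq> 0
    \<and> log 2 (max 1 (1 / \<bar>f (\<omega> !! j)\<bar>)) \<le> real (rho j)"
proof -
  have "2 powr - real (rho (j0 + i)) \<le> 2 powr - real (rho j0)"
    using rho_mono[of j0 "j0 + i"] by simp
  then have "accept approx (j0 + i) (\<omega> !! (j0 + i))"
    using start good by (intro accept_if_abs_ge[where v = "f (\<omega> !! (j0 + i))"] approx samples) linarith
  then obtain j where j: "j \<le> j0 + i" "returns_at approx \<omega> j"
    using exists_returns_at_le by blast
  then have "2 powr - real (rho j) < \<bar>f (\<omega> !! j)\<bar>"
    unfolding returns_at_def by (blast intro: abs_gt_if_accept approx samples)
  then show ?thesis
    using j by (intro exI[of _ j]) (auto intro: log_max_inverse_le)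
qed

section \<open>Independent sampling\<close>

lemma (in prob_space) emeasure_stream_space_snth_prod:
  assumes A: "\<And>i. A i \<in> sets M"
  shows "emeasure (stream_space M) {\<omega>\<in>space (stream_space M). \<forall>i<k. \<omega> !! i \<in> A i}
    = (\<Prod>i<k. emeasure M (A i))"
  using A
proof (induction k arbitrary: A)
  case 0
  interpret S: prob_space "stream_space M" by (rule prob_space_stream_space)
  show ?case using S.emeasure_space_1 by simp
next
  case (Suc k)
  note [measurable] = Suc.prems
  let ?S = "stream_space M"
  have fibre: "{x\<in>space ?S. t ## x \<in> {\<omega>\<in>space ?S. \<forall>i<Suc k. \<omega> !! i \<in> A i}}
      = (if t \<in> A 0 then {x\<in>space ?S. \<forall>i<k. x !! i \<in> A (Suc i)} else {})" for t
    using sets.sets_into_space[OF Suc.prems[of 0]]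
    by (auto simp: space_stream_space less_Suc_eq_0_disj)
  have "emeasure ?S {\<omega>\<in>space ?S. \<forall>i<Suc k. \<omega> !! i \<in> A i}
      = (\<integral>\<^sup>+t. indicator (A 0) t * emeasure ?S {x\<in>space ?S. \<forall>i<k. x !! i \<in> A (Suc i)} \<partial>M)"
  proof (subst emeasure_stream_space)
    show "{\<omega>\<in>space ?S. \<forall>i<Suc k. \<omega> !! i \<in> A i} \<in> sets ?S" by measurable
  qed (intro nn_integral_cong, simp only: fibre split: split_indicator, simp)
  also have "\<dots> = emeasure M (A 0) * (\<Prod>i<k. emeasure M (A (Suc i)))"
    using Suc.IH[of "\<lambda>i. A (Suc i)"] Suc.prems by (simp add: nn_integral_multc)
  finally show ?case by (simp only: prod.lessThan_Suc_shift)
qed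

lemma (in prob_space) prob_stream_space_snth_block:
  assumes [measurable]: "B \<in> sets M"
  shows "measure (stream_space M) {\<omega>\<in>space (stream_space M). \<forall>i<k. \<omega> !! (a + i) \<in> B}
    = measure M B ^ k"
proof -
  interpret S: prob_space "stream_space M" by (rule prob_space_stream_space)
  define A where "A i = (if i < a then space M else B)" for i
  have [measurable]: "A i \<in> sets M" for i by (simp add: A_def)
  have "{\<omega>\<in>space (stream_space M). \<forall>i<k. \<omega> !! (a + i) \<in> B}
      = {\<omega>\<in>space (stream_space M). \<forall>i<a + k. \<omega> !! i \<in> A i}"
  proof (intro Collect_cong conj_cong refl)
    fix \<omega> assume "\<omega> \<in> space (stream_space M)"
    then have space: "\<omega> !! i \<in> space M" for i by (simp add: space_stream_space streams_iff_snth)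
    show "(\<forall>i<k. \<omega> !! (a + i) \<in> B) \<longleftrightarrow> (\<forall>i<a + k. \<omega> !! i \<in> A i)"
    proof
      assume B: "\<forall>i<k. \<omega> !! (a + i) \<in> B"
      show "\<forall>i<a + k. \<omega> !! i \<in> A i"
      proof (intro allI impI)
        fix i assume "i < a + k"
        then show "\<omega> !! i \<in> A i"
          using B[rule_format, of "i - a"] space by (cases "i < a") (auto simp: A_def)
      qed
    qed (metis A_def add_less_cancel_left not_add_less1)
  qed
  also have "emeasure (stream_space M) \<dots> = (\<Prod>i<a + k. emeasure M (A i))"
    by (rule emeasure_stream_space_snth_prod) measurable
  also have "\<dots> = (\<Prod>i<a. emeasure M (A i)) * (\<Prod>i\<in>{a..<a + k}. emeasure M (A i))"
    by (simp add: lessThan_atLeast0 prod.atLeastLessThan_concat)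
  also have "\<dots> = emeasure M B ^ k"
    by (simp add: A_def emeasure_space_1)
  finally show ?thesis
    by (simp add: S.emeasure_eq_measure emeasure_eq_measure ennreal_power)
qed

text \<open>For a pmf every set of samples is measurable; the measurability facts below are derived by
  explicit introduction rules because the measurable method does not terminate on them.\<close>

lemma pred_snth_measure_pmf:
  "Measurable.pred (stream_space (measure_pmf p)) (\<lambda>\<omega>. P (\<omega> !! i))"
  by (rule measurable_compose[OF measurable_snth]) simp

lemma pred_returns_at:
  "Measurable.pred (stream_space (measure_pmf p)) (\<lambda>\<omega>. returns_at approx \<omega> j)"
  unfolding returns_at_def
  by (intro pred_intros_logic(3) pred_intros_countable(1) pred_intros_imp' pred_intros_logic(2)
      pred_snth_measure_pmf)

lemma prob_returns_pseudo_admissible: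
  fixes p :: "real pmf" and f :: "real \<Rightarrow> real"
  assumes approx: "\<And>r x. x \<in> G \<Longrightarrow> \<bar>approx r x - f x\<bar> < 2 powr - real r"
    and support: "set_pmf p \<subseteq> G"
    and start: "5 * 2 powr - real (rho j0) \<le> T"
    and bound: "\<And>j. j < j0 + k \<Longrightarrow> real (rho j) \<le> L"
  shows "1 - measure (measure_pmf p) {x \<in> G. \<bar>f x\<bar> \<le> T} ^ k
    \<le> measure (stream_space (measure_pmf p))
        {\<omega> \<in> space (stream_space (measure_pmf p)). \<exists>j. returns_at approx \<omega> j \<and> \<omega> !! j \<in> G
           \<and> f (\<omega> !! j) \<noteq> 0 \<and> log 2 (max 1 (1 / \<bar>f (\<omega> !! j)\<bar>)) \<le> L}"
    (is "_ \<le> measure ?S ?E")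
proof -
  interpret S: prob_space ?S by (rule prob_space.prob_space_stream_space) (rule prob_space_measure_pmf)
  have E: "?E \<in> sets ?S"
    unfolding pred_def[symmetric]
    by (intro pred_intros_countable(2) pred_intros_logic(3) pred_returns_at pred_snth_measure_pmf)
  define Bad where "Bad = {x \<in> G. \<bar>f x\<bar> \<le> T}"
  define Stuck where "Stuck = {\<omega> \<in> space ?S. \<forall>i<k. \<omega> !! (j0 + i) \<in> Bad}"
  have "AE \<omega> in ?S. stream_all (\<lambda>x. x \<in> G) \<omega>"
    using support by (intro prob_space.AE_stream_all prob_space_measure_pmf)
      (auto simp: AE_measure_pmf_iff)
  then have "AE \<omega> in ?S. \<omega> \<in> space ?S - Stuck \<longrightarrow> \<omega> \<in> ?E"
  proof (rule eventually_mono, intro impI)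
    fix \<omega> assume "stream_all (\<lambda>x. x \<in> G) \<omega>" and \<omega>: "\<omega> \<in> space ?S - Stuck"
    then have samples: "\<omega> !! i \<in> G" for i by (simp add: stream_all_def)
    obtain i where i: "i < k" "T < \<bar>f (\<omega> !! (j0 + i))\<bar>"
      using \<omega> samples unfolding Stuck_def Bad_def by force
    obtain j where "j \<le> j0 + i" "returns_at approx \<omega> j" "f (\<omega> !! j) \<noteq> 0"
        "log 2 (max 1 (1 / \<bar>f (\<omega> !! j)\<bar>)) \<le> real (rho j)"
      using returns_pseudo_admissible[where f = f and G = G and approx = approx, OF approx samples start i(2)]
      by blast
    then show "\<omega> \<in> ?E"
      using \<omega> samples i(1) bound[of j] by force
  qed
  then have "measure ?S (space ?S - Stuck) \<le> measure ?S ?E"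
    using E by (rule S.finite_measure_mono_AE)
  moreover have "measure ?S Stuck = measure (measure_pmf p) Bad ^ k"
    unfolding Stuck_def by (rule prob_space.prob_stream_space_snth_block) (auto intro: prob_space_measure_pmf)
  moreover have "measure ?S (space ?S - Stuck) = 1 - measure ?S Stuck"
  proof (rule S.prob_compl)
    show "Stuck \<in> sets ?S" unfolding Stuck_def pred_def[symmetric]
      by (intro pred_intros_countable(1) pred_intros_imp' pred_snth_measure_pmf)
  qed
  ultimately show ?thesis unfolding Bad_def by simp
qed

lemma measure_pmf_of_set_power_le:
  assumes "finite G" "G \<noteq> {}" "A \<subseteq> G" and "card A * 2 ^ l \<le> card G"
  shows "measure (measure_pmf (pmf_of_set G)) A ^ k \<le> 1 / 2 ^ (k * l)"
proof -
  have "real (card A) * 2 ^ l \<le> real (card G)"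
    using assms(4) by (metis of_nat_le_iff of_nat_mult of_nat_numeral of_nat_power)
  moreover have "0 < card G" using assms(1,2) by (simp add: card_gt_0_iff)
  ultimately have "measure (measure_pmf (pmf_of_set G)) A \<le> 1 / 2 ^ l"
    using assms(1-3) by (simp add: measure_pmf_of_set Int_absorb1 field_simps)
  then have "measure (measure_pmf (pmf_of_set G)) A ^ k \<le> (1 / 2 ^ l) ^ k"
    by (intro power_mono) auto
  also have "\<dots> = 1 / 2 ^ (k * l)" by (simp add: power_one_over power_mult[symmetric] mult.commute)
  finally show ?thesis .
qed

lemma prob_small_values_power_le:
  fixes P :: "real poly" and m eps :: real and lam :: nat
  assumes "P \<noteq> 0" "degree P \<le> n" and eps: "eps > 0"
  defines "G \<equiv> grid m (eps / 2 ^ lam) (2 ^ lam * n)"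
    and "Mx \<equiv> Max ((\<lambda>y. \<bar>poly P y\<bar>) ` grid m eps n)"
  shows "measure (measure_pmf (pmf_of_set G)) {x \<in> G. \<bar>poly P x\<bar> \<le> small_value_threshold Mx n lam} ^ k
    \<le> 1 / 2 ^ (k * lam)"
proof (rule measure_pmf_of_set_power_le)
  have "card {x \<in> G. \<bar>poly P x\<bar> \<le> small_value_threshold Mx n lam} * 2 ^ lam \<le> n * 2 ^ lam"
    using card_small_values_le[OF assms(1-3)] unfolding G_def Mx_def by simp
  also have "\<dots> < card G"
    using card_grid_ge[of "eps / 2 ^ lam" "2 ^ lam * n" m] eps unfolding G_def by (simp add: mult.commute)
  finally show "card {x \<in> G. \<bar>poly P x\<bar> \<le> small_value_threshold Mx n lam} * 2 ^ lam \<le> card G"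
    by simp
qed (auto simp: G_def)

theorem lemma1:
  fixes c :: real
  shows "\<exists>C::real. \<forall>(P::real poly) (n::nat) (m::real) (eps::real) (lam::nat)
            (approx :: nat \<Rightarrow> real \<Rightarrow> real) (k::nat).
     degree P = n \<longrightarrow> n \<ge> 2 \<longrightarrow> eps > 0 \<longrightarrow>
     lam \<ge> 2 \<longrightarrow> real lam \<le> c * log 2 (real n) \<longrightarrow>
     (\<forall>r. \<forall>x\<in>grid m (eps / 2 ^ lam) (2 ^ lam * n).
          \<bar>approx r x - poly P x\<bar> < 2 powr (- real r)) \<longrightarrow>
     k \<ge> 1 \<longrightarrow>
     measure (stream_space (measure_pmf (pmf_of_set (grid m (eps / 2 ^ lam) (2 ^ lam * n)))))
       {\<omega> \<in> space (stream_space (measure_pmf (pmf_of_set (grid m (eps / 2 ^ lam) (2 ^ lam * n))))).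
          \<exists>j. returns_at approx \<omega> j \<and>
              \<omega> !! j \<in> grid m (eps / 2 ^ lam) (2 ^ lam * n) \<and>
              poly P (\<omega> !! j) \<noteq> 0 \<and>
              log 2 (max 1 (1 / \<bar>poly P (\<omega> !! j)\<bar>))
                \<le> 2 ^ k * (C * (real n * log 2 (real n)
                     + log 2 (max 1 (1 / Max ((\<lambda>y. \<bar>poly P y\<bar>) ` grid m eps n)))))}
       \<ge> 1 - 1 / 2 ^ (k * (lam - 1))"
proof (intro exI[of _ "64 * (6 + \<bar>c\<bar>)"] allI impI, goal_cases)
  case (1 P n m eps lam approx k)
  let ?G = "grid m (eps / 2 ^ lam) (2 ^ lam * n)"
  let ?Mx = "Max ((\<lambda>y. \<bar>poly P y\<bar>) ` grid m eps n)"
  let ?D = "real n * log 2 (real n) + log 2 (max 1 (1 / ?Mx))"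
  let ?T = "small_value_threshold ?Mx n lam"
  have P: "P \<noteq> 0" and n: "2 \<le> n" and eps: "0 < eps" using 1 by auto
  have Mx: "0 < ?Mx" using Max_abs_poly_grid_pos[OF P _ eps] 1(1) by simp
  then have T: "0 < ?T" by (simp add: small_value_threshold_def)
  obtain j0 where start: "5 * 2 powr - real (rho j0) \<le> ?T"
    and "\<And>j. j < j0 + k \<Longrightarrow> real (rho j) \<le> 2 ^ k * (64 * ((6 + \<bar>c\<bar>) * ?D))"
    using exists_start_iteration[OF T log_inverse_small_value_threshold_le[OF n 1(5) Mx]
        one_le_log_complexity[OF n]] by blast
  then have bound: "\<And>j. j < j0 + k \<Longrightarrow> real (rho j) \<le> 2 ^ k * (64 * (6 + \<bar>c\<bar>) * ?D)"
    by (simp only: mult.assoc)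
  let ?bad = "measure (measure_pmf (pmf_of_set ?G)) {x \<in> ?G. \<bar>poly P x\<bar> \<le> ?T}"
  have "?bad ^ k \<le> 1 / 2 ^ (k * lam)"
    using prob_small_values_power_le[OF P _ eps, where m = m and lam = lam and k = k] 1(1) by simp
  also have "\<dots> \<le> 1 / 2 ^ (k * (lam - 1))" by (intro divide_left_mono power_increasing) auto
  finally have "1 - 1 / 2 ^ (k * (lam - 1)) \<le> 1 - ?bad ^ k" by simp
  also have "\<dots> \<le> measure (stream_space (measure_pmf (pmf_of_set ?G)))
      {\<omega> \<in> space (stream_space (measure_pmf (pmf_of_set ?G))). \<exists>j. returns_at approx \<omega> j
        \<and> \<omega> !! j \<in> ?G \<and> poly P (\<omega> !! j) \<noteq> 0
        \<and> log 2 (max 1 (1 / \<bar>poly P (\<omega> !! j)\<bar>)) \<le> 2 ^ k * (64 * (6 + \<bar>c\<bar>) * ?D)}"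
  proof (rule prob_returns_pseudo_admissible)
    show "\<bar>approx r x - poly P x\<bar> < 2 powr - real r" if "x \<in> ?G" for r x
      using 1(6) that by blast
  qed (use start bound in auto)
  finally show ?case .
qed

end
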